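(* All twelve POPs $(a,b,c;d)$ with $d\in\{2,3\}$ and $(a,b,c)$ an arbitrary ordering of $[4]\setminus\{d\}$ are Wilf-equivalent to one another; in particular $(4,1,2;3)\sim(4,2,1;3)\sim(2,4,1;3)$.
   Context: A partially ordered pattern (POP) $p$ of size $k$ is a partial order $\le_p$ on $[k]$. A permutation $\pi=\pi_1\cdots\pi_n$ contains $p$ if there are indices $i_1<\dots<i_k$ with $\pi_{i_j}<\pi_{i_m}$ whenever $j<_p m$; otherwise it avoids $p$. $p\sim q$ (Wilf-equivalence) means the numbers of permutations of $[n]$ avoiding $p$ and avoiding $q$ coincide for all $n\ge1$. Notation: $(a,b,c;d)$ denotes the POP of size $4$ on $\{a,b,c,d\}=[4]$ in which $c<b<a$ form a chain and $d$ is isolated. *)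

theory Defs
  imports Main
begin

text \<open>A POP of size k is given by its strict order relation lt on {1..k}
  (lt j m means j <_p m). A permutation of [n] is a list of length n,
  distinct, with entries {1..n}; positions are 0-based list indices.\<close>

definition perms :: "nat \<Rightarrow> nat list set" where
  "perms n = {\<pi>. distinct \<pi> \<and> set \<pi> = {1..n}}"

definition contains_pop :: "nat \<Rightarrow> (nat \<Rightarrow> nat \<Rightarrow> bool) \<Rightarrow> nat list \<Rightarrow> bool" where
  "contains_pop k lt \<pi> \<longleftrightarrow>
     (\<exists>\<iota> :: nat \<Rightarrow> nat. strict_mono_on {1..k} \<iota> \<and> (\<forall>j\<in>{1..k}. \<iota> j < length \<pi>) \<and>
        (\<forall>j\<in>{1..k}. \<forall>m\<in>{1..k}. lt j m \<longrightarrow> \<pi> ! (\<iota> j) < \<pi> ! (\<iota> m)))"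

definition avoiders :: "nat \<Rightarrow> nat \<Rightarrow> (nat \<Rightarrow> nat \<Rightarrow> bool) \<Rightarrow> nat list set" where
  "avoiders n k lt = {\<pi> \<in> perms n. \<not> contains_pop k lt \<pi>}"

definition wilf_equiv :: "nat \<Rightarrow> (nat \<Rightarrow> nat \<Rightarrow> bool) \<Rightarrow> (nat \<Rightarrow> nat \<Rightarrow> bool) \<Rightarrow> bool" where
  "wilf_equiv k p q \<longleftrightarrow> (\<forall>n\<ge>1. card (avoiders n k p) = card (avoiders n k q))"

text \<open>The POP (a,b,c;d) of size 4: chain c < b < a, d isolated (strict order).\<close>
definition chain_pop :: "nat \<Rightarrow> nat \<Rightarrow> nat \<Rightarrow> nat \<Rightarrow> nat \<Rightarrow> nat \<Rightarrow> bool" where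
  "chain_pop a b c d = (\<lambda>j m. (j = c \<and> m = b) \<or> (j = b \<and> m = a) \<or> (j = c \<and> m = a))"

end

theory Submission
  imports Defs
begin

text \<open>
  Since d is isolated at position 2 or 3, a permutation contains (a,b,c;d) iff it contains a
  classical pattern of length three at positions i < j < k with a gap of at least two between
  two consecutive positions.  Reversal moves the gap from the first to the second place and
  complementation identifies the patterns in pairs, so only the patterns 321, 312 and 213 with
  the gap k \<ge> j + 2 remain.  Their avoiders are generated by appending a last entry.  Label a
  permutation by (a, b), where a counts the values that may be appended and b those among them
  that no pair ending at the last entry forbids.  In all three generating trees the root is
  labelled (2,2) and a node labelled (a,b) has a - b children labelled (b,b) and b children
  labelled (b+1,b+1), (b+1,b), \<dots>, (b+1,2); so the trees have the same number of nodes at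
  every level.
\<close>

lemma card_less_card_if_subset_notin:
  "finite B \<Longrightarrow> A \<subseteq> B \<Longrightarrow> x \<in> B \<Longrightarrow> x \<notin> A \<Longrightarrow> card A < card B"
  by (metis psubsetI psubset_card_mono)

lemma bij_betw_lessThan_card_if_inj_on:
  assumes "finite A" "inj_on c A" "\<And>v. v \<in> A \<Longrightarrow> c v < card A"
  shows "bij_betw c A {..<card A}"
proof -
  have "c ` A \<subseteq> {..<card A}"
    using assms(3) by auto
  moreover have "card (c ` A) = card {..<card A}"
    using card_image[OF assms(2)] by simp
  ultimately show ?thesis
    using assms(2) by (simp add: bij_betw_def card_subset_eq)
qed

lemma bij_betw_card_greater:
  fixes A :: "'a::linorder set"
  assumes "finite A"
  shows "bij_betw (\<lambda>v. card {u \<in> A. v < u}) A {..<card A}"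
proof (rule bij_betw_lessThan_card_if_inj_on[OF assms])
  show "inj_on (\<lambda>v. card {u \<in> A. v < u}) A"
  proof (rule linorder_inj_onI')
    fix x y assume "x \<in> A" "y \<in> A" "x < y"
    then have "card {u \<in> A. y < u} < card {u \<in> A. x < u}"
      using assms by (intro card_less_card_if_subset_notin[where x = y]) auto
    then show "card {u \<in> A. x < u} \<noteq> card {u \<in> A. y < u}"
      by simp
  qed
  show "card {u \<in> A. v < u} < card A" if "v \<in> A" for v
    using assms that by (intro card_less_card_if_subset_notin[where x = v]) auto
qed

lemma eq_image_Suc:
  assumes "0 \<notin> S" "\<And>u. Suc u \<in> S \<longleftrightarrow> u \<in> B"
  shows "S = Suc ` B"
proof (rule set_eqI)
  fix s
  show "s \<in> S \<longleftrightarrow> s \<in> Suc ` B"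
    using assms by (cases s) auto
qed

section \<open>Appending an entry to a permutation\<close>

definition lift :: "nat \<Rightarrow> nat \<Rightarrow> nat" where
  "lift v x = (if v \<le> x then Suc x else x)"

definition unlift :: "nat \<Rightarrow> nat \<Rightarrow> nat" where
  "unlift v x = (if v < x then x - 1 else x)"

lemma lift_less_lift_iff [simp]: "lift v x < lift v y \<longleftrightarrow> x < y"
  unfolding lift_def by auto

lemma lift_neq [simp]: "lift v x \<noteq> v" "v \<noteq> lift v x"
  unfolding lift_def by auto

lemma inj_lift: "inj (lift v)"
  unfolding lift_def by (auto intro: injI split: if_splits)

lemma lift_unlift: "x \<noteq> v \<Longrightarrow> lift v (unlift v x) = x"
  unfolding lift_def unlift_def by auto

lemma unlift_lift [simp]: "unlift v (lift v x) = x"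
  unfolding lift_def unlift_def by auto

lemma lift_less_self_iff: "lift s x < s \<longleftrightarrow> x < s"
  unfolding lift_def by auto

lemma self_less_lift_iff: "s < lift s x \<longleftrightarrow> s \<le> x"
  unfolding lift_def by auto

lemma lift_less_iff_less_unlift: "lift v x < s \<longleftrightarrow> x < unlift v s"
  unfolding lift_def unlift_def by auto

lemma le_lift_iff_unlift_le: "s \<le> lift v x \<longleftrightarrow> unlift v s \<le> x"
  unfolding lift_def unlift_def by auto

lemma unlift_in_atLeastAtMost:
  "v \<in> {1..Suc m} \<Longrightarrow> s \<in> {1..Suc (Suc m)} \<Longrightarrow> unlift v s \<in> {1..Suc m}"
  unfolding unlift_def by auto

lemma lift_image_atLeastAtMost: "v \<in> {1..Suc n} \<Longrightarrow> lift v ` {1..n} = {1..Suc n} - {v}"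
proof
  assume v: "v \<in> {1..Suc n}"
  show "lift v ` {1..n} \<subseteq> {1..Suc n} - {v}"
    unfolding lift_def by auto
  show "{1..Suc n} - {v} \<subseteq> lift v ` {1..n}"
  proof
    fix x assume x: "x \<in> {1..Suc n} - {v}"
    then have "unlift v x \<in> {1..n}"
      using v unfolding unlift_def by auto
    then show "x \<in> lift v ` {1..n}"
      using x lift_unlift by (metis DiffD2 image_eqI singletonI)
  qed
qed

lemma unlift_image_atLeastAtMost: "v \<in> {1..Suc n} \<Longrightarrow> unlift v ` ({1..Suc n} - {v}) = {1..n}"
  by (simp only: lift_image_atLeastAtMost[symmetric] image_image unlift_lift image_ident)

lemma perms_length: "p \<in> perms n \<Longrightarrow> length p = n"
  unfolding perms_def using distinct_card by fastforce

lemma nth_in_perms: "p \<in> perms n \<Longrightarrow> i < n \<Longrightarrow> p ! i \<in> {1..n}"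
  using perms_length[of p n] nth_mem[of i p] unfolding perms_def by auto

lemma perms_ex_nth_iff: "p \<in> perms n \<Longrightarrow> (\<exists>i<n. P (p ! i)) \<longleftrightarrow> (\<exists>x\<in>{1..n}. P x)"
  using perms_length[of p n] in_set_conv_nth[of _ p] unfolding perms_def by auto

lemma finite_perms: "finite (perms n)"
proof (rule finite_subset)
  show "perms n \<subseteq> {xs. set xs \<subseteq> {1..n} \<and> length xs = n}"
    using perms_length unfolding perms_def by auto
qed (simp add: finite_lists_length_eq)

lemma perms_1: "perms 1 = {[1]}"
proof
  show "perms 1 \<subseteq> {[1]}"
  proof
    fix p assume p: "p \<in> perms 1"
    then obtain x where "p = [x]"
      using perms_length by (metis One_nat_def length_0_conv length_Suc_conv)
    then show "p \<in> {[1]}"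
      using p unfolding perms_def by simp
  qed
qed (simp add: perms_def)

definition extend :: "nat list \<Rightarrow> nat \<Rightarrow> nat list" where
  "extend p v = map (lift v) p @ [v]"

lemma length_extend [simp]: "length (extend p v) = Suc (length p)"
  unfolding extend_def by simp

lemma nth_extend: "i < length p \<Longrightarrow> extend p v ! i = lift v (p ! i)"
  unfolding extend_def by (simp add: nth_append)

lemma nth_extend_last: "extend p v ! length p = v"
  unfolding extend_def by (simp add: nth_append)

lemma extend_in_perms: "p \<in> perms n \<Longrightarrow> v \<in> {1..Suc n} \<Longrightarrow> extend p v \<in> perms (Suc n)"
  unfolding perms_def extend_def
  using lift_image_atLeastAtMost[of v n] by (auto simp: distinct_map inj_on_subset[OF inj_lift])

lemma extend_eq_extend_iff: "extend p v = extend q w \<longleftrightarrow> p = q \<and> v = w"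
  unfolding extend_def using inj_lift by (auto simp: inj_map_eq_map)

lemma extend_surj:
  assumes s: "s \<in> perms (Suc n)"
  obtains p v where "p \<in> perms n" "v \<in> {1..Suc n}" "s = extend p v"
proof -
  obtain b v where sb: "s = b @ [v]"
    using perms_length[OF s] by (metis length_Suc_conv_rev)
  have v: "v \<in> {1..Suc n}" and vb: "v \<notin> set b" and b: "distinct b" "set b = {1..Suc n} - {v}"
    using s sb unfolding perms_def by auto
  define p where "p = map (unlift v) b"
  have "s = extend p v"
    unfolding sb extend_def p_def using vb by (induct b) (auto simp: lift_unlift)
  moreover have "inj_on (unlift v) (set b)"
    using vb by (metis inj_onI lift_unlift)
  then have "p \<in> perms n"
    using b unlift_image_atLeastAtMost[OF v] unfolding perms_def p_def by (simp add: distinct_map)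
  ultimately show thesis
    using that v by blast
qed

lemma bij_betw_extend:
  "bij_betw (\<lambda>(p, v). extend p v) (perms n \<times> {1..Suc n}) (perms (Suc n))"
proof (rule bij_betw_imageI)
  show "inj_on (\<lambda>(p, v). extend p v) (perms n \<times> {1..Suc n})"
    by (auto intro: inj_onI simp: extend_eq_extend_iff)
  show "(\<lambda>(p, v). extend p v) ` (perms n \<times> {1..Suc n}) = perms (Suc n)"
    by (auto simp: extend_in_perms image_iff elim!: extend_surj)
qed

section \<open>Gapped patterns and their generating trees\<close>

definition occurs_gapped :: "(nat \<Rightarrow> nat \<Rightarrow> nat \<Rightarrow> bool) \<Rightarrow> nat list \<Rightarrow> bool" where
  "occurs_gapped R w \<longleftrightarrow> (\<exists>i j k. i < j \<and> j + 2 \<le> k \<and> k < length w \<and> R (w ! i) (w ! j) (w ! k))"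

definition gapped_avoiders :: "(nat \<Rightarrow> nat \<Rightarrow> nat \<Rightarrow> bool) \<Rightarrow> nat \<Rightarrow> nat list set" where
  "gapped_avoiders R n = {p \<in> perms n. \<not> occurs_gapped R p}"

text \<open>
  A site of p is a value s \<in> {1..length p + 1}; appending it yields extend p s, in which the
  entries \<ge> s of p are lifted by one, and kills R x y s says that the entries x, y of p
  followed by s form an occurrence of R.  The sites in active_sites R 2 p may be appended without
  creating a gapped occurrence, and those in active_sites R 1 p are the ones that stay active in
  every child.
\<close>

definition kills :: "(nat \<Rightarrow> nat \<Rightarrow> nat \<Rightarrow> bool) \<Rightarrow> nat \<Rightarrow> nat \<Rightarrow> nat \<Rightarrow> bool" where
  "kills R x y s \<longleftrightarrow> R (lift s x) (lift s y) s"

definition killed_sites :: "(nat \<Rightarrow> nat \<Rightarrow> nat \<Rightarrow> bool) \<Rightarrow> nat \<Rightarrow> nat list \<Rightarrow> nat set" where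
  "killed_sites R g p = {s. \<exists>i j. i < j \<and> j + g \<le> length p \<and> kills R (p ! i) (p ! j) s}"

definition active_sites :: "(nat \<Rightarrow> nat \<Rightarrow> nat \<Rightarrow> bool) \<Rightarrow> nat \<Rightarrow> nat list \<Rightarrow> nat set" where
  "active_sites R g p = {1..Suc (length p)} - killed_sites R g p"

definition label :: "(nat \<Rightarrow> nat \<Rightarrow> nat \<Rightarrow> bool) \<Rightarrow> nat list \<Rightarrow> nat \<times> nat" where
  "label R p = (card (active_sites R 2 p), card (active_sites R 1 p))"

(* The site v of p splits into the sites v and v + 1 of extend p v. *)
definition inherited_sites :: "nat \<Rightarrow> nat \<Rightarrow> nat set \<Rightarrow> nat set" where
  "inherited_sites v m X = {s \<in> {1..Suc (Suc m)}. unlift v s \<in> X}"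

definition killed_by_new_entry :: "(nat \<Rightarrow> nat \<Rightarrow> nat \<Rightarrow> bool) \<Rightarrow> nat \<Rightarrow> nat \<Rightarrow> nat set" where
  "killed_by_new_entry R m v = {s \<in> {1..Suc (Suc m)}. \<exists>x\<in>{1..m}. kills R (lift v x) v s}"

lemma active_sites_1_subset: "active_sites R 1 p \<subseteq> active_sites R 2 p"
  unfolding active_sites_def killed_sites_def by fastforce

lemma finite_active_sites [simp]: "finite (active_sites R g p)"
  unfolding active_sites_def by simp

lemma finite_inherited_sites [simp]: "finite (inherited_sites v m X)"
  unfolding inherited_sites_def by simp

lemma inherited_sites_eq:
  assumes X: "X \<subseteq> {1..Suc m}" and v: "v \<in> {1..Suc m}"
  shows "inherited_sites v m X = lift v ` X \<union> ({v} \<inter> X)"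
proof (rule set_eqI)
  fix s
  show "s \<in> inherited_sites v m X \<longleftrightarrow> s \<in> lift v ` X \<union> ({v} \<inter> X)"
  proof (cases "s = v")
    case True
    then show ?thesis
      using v by (auto simp: inherited_sites_def unlift_def)
  next
    case False
    have "s \<in> lift v ` X \<longleftrightarrow> unlift v s \<in> X"
      using lift_unlift[OF False] by (metis image_iff unlift_lift)
    moreover have "lift v ` X \<subseteq> {1..Suc (Suc m)}"
      using X unfolding lift_def by auto
    ultimately show ?thesis
      using False unfolding inherited_sites_def by auto
  qed
qed

lemma card_inherited_sites:
  assumes X: "X \<subseteq> {1..Suc m}" and v: "v \<in> {1..Suc m}"
  shows "card (inherited_sites v m X) = card X + (if v \<in> X then 1 else 0)"
proof -
  have "finite X"
    using X finite_subset by blast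
  moreover have "lift v ` X \<inter> ({v} \<inter> X) = {}"
    by auto
  ultimately have "card (inherited_sites v m X) = card (lift v ` X) + card ({v} \<inter> X)"
    unfolding inherited_sites_eq[OF X v] by (simp add: card_Un_disjoint)
  then show ?thesis
    using card_image[OF inj_on_subset[OF inj_lift]] by simp
qed

lemma finite_gapped_avoiders [simp]: "finite (gapped_avoiders R n)"
  unfolding gapped_avoiders_def using finite_perms by simp

lemma gapped_avoiders_1: "gapped_avoiders R 1 = {[1]}"
  unfolding gapped_avoiders_def perms_1 occurs_gapped_def by auto

lemma label_singleton: "label R [1] = (2, 2)"
  unfolding label_def active_sites_def killed_sites_def by simp

lemma killing_pair_at_end:
  assumes "v \<in> active_sites R 2 p - active_sites R 1 p"
  obtains i j where "i < j" "Suc j = length p" "kills R (p ! i) (p ! j) v"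
proof -
  obtain i j where "i < j" "j + 1 \<le> length p" "kills R (p ! i) (p ! j) v"
    using assms unfolding active_sites_def killed_sites_def by auto
  moreover have "\<not> j + 2 \<le> length p"
    using assms calculation unfolding active_sites_def killed_sites_def by auto
  ultimately show thesis
    using that by simp
qed

lemma active_sites_subset: "p \<in> perms m \<Longrightarrow> active_sites R g p \<subseteq> {1..Suc m}"
  unfolding active_sites_def using perms_length by auto

lemma Suc_in_active_sites_1:
  assumes p: "p \<in> perms m" and no_kill: "\<And>x y. x \<in> {1..m} \<Longrightarrow> y \<in> {1..m} \<Longrightarrow> \<not> kills R x y (Suc m)"
  shows "Suc m \<in> active_sites R 1 p"
  using nth_in_perms[OF p] no_kill perms_length[OF p]
  unfolding active_sites_def killed_sites_def by fastforce

locale order_invariant =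
  fixes R :: "nat \<Rightarrow> nat \<Rightarrow> nat \<Rightarrow> bool"
  assumes order_invariant: "\<And>a b c a' b' c'.
    (a < b \<longleftrightarrow> a' < b') \<Longrightarrow> (b < a \<longleftrightarrow> b' < a') \<Longrightarrow> (a < c \<longleftrightarrow> a' < c') \<Longrightarrow>
    (c < a \<longleftrightarrow> c' < a') \<Longrightarrow> (b < c \<longleftrightarrow> b' < c') \<Longrightarrow> (c < b \<longleftrightarrow> c' < b') \<Longrightarrow>
    R a b c = R a' b' c'"
begin

lemma R_lift: "R (lift v a) (lift v b) (lift v c) = R a b c"
  by (rule order_invariant) auto

lemma kills_lift: "kills R (lift v x) (lift v y) s = kills R x y (unlift v s)"
  unfolding kills_def
  by (rule order_invariant)
    (simp_all add: lift_less_self_iff self_less_lift_iff lift_less_iff_less_unlift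
       le_lift_iff_unlift_le)

lemma kills_extend:
  "i < length p \<Longrightarrow> j < length p \<Longrightarrow>
    kills R (extend p v ! i) (extend p v ! j) s = kills R (p ! i) (p ! j) (unlift v s)"
  by (simp add: nth_extend kills_lift)

lemma occurs_gapped_extend:
  "occurs_gapped R (extend p v) \<longleftrightarrow> occurs_gapped R p \<or> v \<in> killed_sites R 2 p"
proof
  assume "occurs_gapped R (extend p v)"
  then obtain i j k where ijk: "i < j" "j + 2 \<le> k" "k \<le> length p"
      and R: "R (extend p v ! i) (extend p v ! j) (extend p v ! k)"
    unfolding occurs_gapped_def by auto
  show "occurs_gapped R p \<or> v \<in> killed_sites R 2 p"
  proof (cases "k = length p")
    case True
    then have "kills R (p ! i) (p ! j) v"
      using R ijk by (simp add: nth_extend nth_extend_last kills_def)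
    then show ?thesis
      using ijk True unfolding killed_sites_def by blast
  next
    case False
    then have "R (p ! i) (p ! j) (p ! k)" "k < length p"
      using R ijk by (simp_all add: nth_extend R_lift)
    then show ?thesis
      using ijk unfolding occurs_gapped_def by blast
  qed
next
  assume "occurs_gapped R p \<or> v \<in> killed_sites R 2 p"
  then show "occurs_gapped R (extend p v)"
  proof
    assume "occurs_gapped R p"
    then obtain i j k where ijk: "i < j" "j + 2 \<le> k" "k < length p" "R (p ! i) (p ! j) (p ! k)"
      unfolding occurs_gapped_def by auto
    then have "R (extend p v ! i) (extend p v ! j) (extend p v ! k)" "k < length (extend p v)"
      by (simp_all add: nth_extend R_lift)
    then show ?thesis
      using ijk unfolding occurs_gapped_def by blast
  next
    assume "v \<in> killed_sites R 2 p"
    then obtain i j where ij: "i < j" "j + 2 \<le> length p" "kills R (p ! i) (p ! j) v"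
      unfolding killed_sites_def by auto
    then have "R (extend p v ! i) (extend p v ! j) (extend p v ! length p)"
      by (simp add: nth_extend nth_extend_last kills_def)
    then show ?thesis
      using ij unfolding occurs_gapped_def by (metis length_extend lessI)
  qed
qed

lemma active_sites_extend:
  assumes v: "v \<in> {1..Suc (length p)}"
  shows "active_sites R 2 (extend p v) = inherited_sites v (length p) (active_sites R 1 p)"
proof -
  have pair: "i < j \<and> j + 2 \<le> length (extend p v) \<and> kills R (extend p v ! i) (extend p v ! j) s
      \<longleftrightarrow> i < j \<and> j + 1 \<le> length p \<and> kills R (p ! i) (p ! j) (unlift v s)" for i j s
    using kills_extend[of i p j v s] by auto
  have "s \<in> killed_sites R 2 (extend p v) \<longleftrightarrow> unlift v s \<in> killed_sites R 1 p" for s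
    by (simp only: killed_sites_def mem_Collect_eq pair)
  then show ?thesis
    unfolding active_sites_def inherited_sites_def using unlift_in_atLeastAtMost[OF v] by auto
qed

lemma killed_sites_1_extend:
  assumes m: "length p = m"
  shows "s \<in> killed_sites R 1 (extend p v) \<longleftrightarrow>
    unlift v s \<in> killed_sites R 1 p \<or> (\<exists>i<m. kills R (lift v (p ! i)) v s)"
proof
  assume "s \<in> killed_sites R 1 (extend p v)"
  then obtain i j where ij: "i < j" "j + 1 \<le> Suc m"
      and K: "kills R (extend p v ! i) (extend p v ! j) s"
    unfolding killed_sites_def length_extend m mem_Collect_eq by blast
  show "unlift v s \<in> killed_sites R 1 p \<or> (\<exists>i<m. kills R (lift v (p ! i)) v s)"
  proof (cases "j = m")
    case True
    then have "kills R (lift v (p ! i)) v s"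
      using K ij m nth_extend_last[of p v] by (simp add: nth_extend)
    then show ?thesis
      using ij True by auto
  next
    case False
    then have "kills R (p ! i) (p ! j) (unlift v s)" "j + 1 \<le> length p"
      using K ij m by (simp_all add: kills_extend)
    then show ?thesis
      using ij unfolding killed_sites_def by blast
  qed
next
  assume "unlift v s \<in> killed_sites R 1 p \<or> (\<exists>i<m. kills R (lift v (p ! i)) v s)"
  then show "s \<in> killed_sites R 1 (extend p v)"
  proof
    assume "unlift v s \<in> killed_sites R 1 p"
    then obtain i j where ij: "i < j" "j + 1 \<le> length p" "kills R (p ! i) (p ! j) (unlift v s)"
      unfolding killed_sites_def by auto
    then have "kills R (extend p v ! i) (extend p v ! j) s" "j + 1 \<le> length (extend p v)"
      by (simp_all add: kills_extend)
    then show ?thesis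
      using ij unfolding killed_sites_def by blast
  next
    assume "\<exists>i<m. kills R (lift v (p ! i)) v s"
    then obtain i where i: "i < m" "kills R (extend p v ! i) (extend p v ! m) s"
      using m by (auto simp: nth_extend nth_extend_last)
    moreover have "m + 1 \<le> length (extend p v)"
      using m by simp
    ultimately show ?thesis
      unfolding killed_sites_def by blast
  qed
qed

lemma active_sites_1_extend:
  assumes p: "p \<in> perms m" and v: "v \<in> {1..Suc m}"
  shows "active_sites R 1 (extend p v) =
    inherited_sites v m (active_sites R 1 p) - killed_by_new_entry R m v"
proof -
  have m: "length p = m"
    using perms_length[OF p] .
  have ex_iff: "(\<exists>i<m. kills R (lift v (p ! i)) v s) \<longleftrightarrow> (\<exists>x\<in>{1..m}. kills R (lift v x) v s)" for s
    using perms_ex_nth_iff[OF p] .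
  show ?thesis
  proof (rule set_eqI)
    fix s
    show "s \<in> active_sites R 1 (extend p v) \<longleftrightarrow>
        s \<in> inherited_sites v m (active_sites R 1 p) - killed_by_new_entry R m v"
      using killed_sites_1_extend[OF m, of s v] ex_iff[of s] unlift_in_atLeastAtMost[OF v, of s]
      unfolding active_sites_def inherited_sites_def killed_by_new_entry_def
      by (auto simp: m)
  qed
qed

lemma bij_betw_extend_gapped_avoiders:
  "bij_betw (\<lambda>(p, v). extend p v)
     (Sigma (gapped_avoiders R n) (active_sites R 2)) (gapped_avoiders R (Suc n))"
proof -
  have Sigma_eq: "Sigma (gapped_avoiders R n) (active_sites R 2) =
      {x \<in> perms n \<times> {1..Suc n}. \<not> occurs_gapped R (case x of (p, v) \<Rightarrow> extend p v)}"
    by (auto simp: gapped_avoiders_def active_sites_def occurs_gapped_extend perms_length)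
  show ?thesis
    unfolding Sigma_eq gapped_avoiders_def[of R "Suc n"]
    by (rule bij_betw_Collect[OF bij_betw_extend]) simp
qed

lemma sum_gapped_avoiders_Suc:
  "(\<Sum>s\<in>gapped_avoiders R (Suc n). f s) =
    (\<Sum>p\<in>gapped_avoiders R n. \<Sum>v\<in>active_sites R 2 p. f (extend p v))"
  using sum.reindex_bij_betw[OF bij_betw_extend_gapped_avoiders, of f, symmetric]
  by (simp add: sum.Sigma split_def)

end

text \<open>
  level_sum m f is the sum of f over the labels at depth m of the generating tree described in
  the introduction; succession f (a,b) is the sum of f over the children of a node (a,b).
\<close>

fun succession :: "(nat \<times> nat \<Rightarrow> nat) \<Rightarrow> nat \<times> nat \<Rightarrow> nat" where
  "succession f (a, b) = (a - b) * f (b, b) + (\<Sum>t<b. f (Suc b, Suc b - t))"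

fun level_sum :: "nat \<Rightarrow> (nat \<times> nat \<Rightarrow> nat) \<Rightarrow> nat" where
  "level_sum 0 f = f (2, 2)"
| "level_sum (Suc m) f = level_sum m (succession f)"

text \<open>
  The assumptions give the children of a node labelled (a,b) the labels of the succession rule:
  the a - b children at sites outside active_sites R 1 p are labelled (b,b), and the numbers of
  inherited sites killed by the new entry in the other b children run through 0, \<dots>, b - 1.
\<close>

locale succession_rule = order_invariant +
  assumes killed_by_new_entry_disjoint:
    "p \<in> perms m \<Longrightarrow> v \<in> active_sites R 2 p - active_sites R 1 p \<Longrightarrow>
      killed_by_new_entry R m v \<inter> inherited_sites v m (active_sites R 1 p) = {}"
  and bij_betw_card_killed_by_new_entry:
    "p \<in> perms m \<Longrightarrow>
      bij_betw (\<lambda>v. card (killed_by_new_entry R m v \<inter> inherited_sites v m (active_sites R 1 p)))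
        (active_sites R 1 p) {..<card (active_sites R 1 p)}"
begin

lemma sum_label_extend:
  assumes p: "p \<in> perms m"
  shows "(\<Sum>v\<in>active_sites R 2 p. f (label R (extend p v))) = succession f (label R p)"
proof -
  let ?A = "active_sites R 2 p" and ?B = "active_sites R 1 p"
  let ?K = "\<lambda>v. killed_by_new_entry R m v \<inter> inherited_sites v m ?B"
  have m: "length p = m"
    using perms_length[OF p] .
  have B_sub: "?B \<subseteq> ?A"
    by (rule active_sites_1_subset)
  have B_range: "?B \<subseteq> {1..Suc m}" and A_range: "?A \<subseteq> {1..Suc m}"
    unfolding active_sites_def m by auto
  have label_A: "label R (extend p v) = (card ?B, card ?B)" if v: "v \<in> ?A - ?B" for v
  proof -
    have v': "v \<in> {1..Suc m}"
      using v A_range by auto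
    have "active_sites R 2 (extend p v) = inherited_sites v m ?B"
      "active_sites R 1 (extend p v) = inherited_sites v m ?B"
      using active_sites_extend[of v p] active_sites_1_extend[OF p v']
        killed_by_new_entry_disjoint[OF p v] v' m by auto
    then show ?thesis
      unfolding label_def using card_inherited_sites[OF B_range v'] v by simp
  qed
  have label_B: "label R (extend p v) = (Suc (card ?B), Suc (card ?B) - card (?K v))"
    if v: "v \<in> ?B" for v
  proof -
    have v': "v \<in> {1..Suc m}"
      using v B_range by auto
    have card_inh: "card (inherited_sites v m ?B) = Suc (card ?B)"
      using card_inherited_sites[OF B_range v'] v by simp
    have "active_sites R 1 (extend p v) = inherited_sites v m ?B - ?K v"
      using active_sites_1_extend[OF p v'] by auto
    then have "card (active_sites R 1 (extend p v)) = card (inherited_sites v m ?B) - card (?K v)"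
      by (simp add: card_Diff_subset)
    then show ?thesis
      unfolding label_def using active_sites_extend[of v p] v' m card_inh by simp
  qed
  have "(\<Sum>v\<in>?A. f (label R (extend p v))) =
      (\<Sum>v\<in>?A - ?B. f (label R (extend p v))) + (\<Sum>v\<in>?B. f (label R (extend p v)))"
    using sum.subset_diff[OF B_sub] by simp
  also have "(\<Sum>v\<in>?A - ?B. f (label R (extend p v))) = (card ?A - card ?B) * f (card ?B, card ?B)"
    using label_A card_Diff_subset[OF _ B_sub] by simp
  also have "(\<Sum>v\<in>?B. f (label R (extend p v))) = (\<Sum>v\<in>?B. f (Suc (card ?B), Suc (card ?B) - card (?K v)))"
    using label_B by simp
  also have "\<dots> = (\<Sum>t<card ?B. f (Suc (card ?B), Suc (card ?B) - t))"
    using sum.reindex_bij_betw[OF bij_betw_card_killed_by_new_entry[OF p]] by simp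
  finally show ?thesis
    unfolding label_def by simp
qed

lemma sum_label_gapped_avoiders: "(\<Sum>p\<in>gapped_avoiders R (Suc m). f (label R p)) = level_sum m f"
proof (induction m arbitrary: f)
  case 0
  then show ?case
    using gapped_avoiders_1 label_singleton by (simp add: One_nat_def)
next
  case (Suc m)
  have "(\<Sum>p\<in>gapped_avoiders R (Suc (Suc m)). f (label R p)) =
      (\<Sum>p\<in>gapped_avoiders R (Suc m). \<Sum>v\<in>active_sites R 2 p. f (label R (extend p v)))"
    by (rule sum_gapped_avoiders_Suc)
  also have "\<dots> = (\<Sum>p\<in>gapped_avoiders R (Suc m). succession f (label R p))"
    by (rule sum.cong) (auto simp: gapped_avoiders_def sum_label_extend)
  also have "\<dots> = level_sum (Suc m) f"
    using Suc.IH by simp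
  finally show ?case .
qed

lemma card_gapped_avoiders: "card (gapped_avoiders R (Suc m)) = level_sum m (\<lambda>_. 1)"
  using sum_label_gapped_avoiders[of "\<lambda>_. 1" m] by simp

end

section \<open>The gapped patterns 321, 312 and 213\<close>

definition pattern_321 :: "nat \<Rightarrow> nat \<Rightarrow> nat \<Rightarrow> bool" where
  "pattern_321 x y z \<longleftrightarrow> z < y \<and> y < x"

definition pattern_312 :: "nat \<Rightarrow> nat \<Rightarrow> nat \<Rightarrow> bool" where
  "pattern_312 x y z \<longleftrightarrow> y < z \<and> z < x"

definition pattern_213 :: "nat \<Rightarrow> nat \<Rightarrow> nat \<Rightarrow> bool" where
  "pattern_213 x y z \<longleftrightarrow> y < x \<and> x < z"

lemma order_invariant_321: "order_invariant pattern_321"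
  by unfold_locales (auto simp: pattern_321_def)

lemma kills_321: "kills pattern_321 x y s \<longleftrightarrow> y < x \<and> s \<le> y"
  unfolding kills_def pattern_321_def lift_def by auto

lemma killed_by_new_entry_321:
  "killed_by_new_entry pattern_321 m v = (if v \<le> m then {1..v} else {})"
  unfolding killed_by_new_entry_def kills_321 lift_def by (auto intro: bexI[of _ m])

lemma killed_by_new_entry_disjoint_321:
  assumes v: "v \<in> active_sites pattern_321 2 p - active_sites pattern_321 1 p"
  shows "killed_by_new_entry pattern_321 m v \<inter> inherited_sites v m (active_sites pattern_321 1 p) = {}"
proof -
  obtain i j where ij: "i < j" "Suc j = length p" and "kills pattern_321 (p ! i) (p ! j) v"
    using killing_pair_at_end[OF v] .
  then have "p ! j < p ! i" "v \<le> p ! j"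
    unfolding kills_321 by simp_all
  then have "s \<in> killed_sites pattern_321 1 p" if "s \<le> v" for s
    using ij that unfolding killed_sites_def kills_321 by force
  then show ?thesis
    unfolding killed_by_new_entry_321 inherited_sites_def active_sites_def unlift_def by auto
qed

lemma killed_by_new_entry_inter_inherited_321:
  "A \<subseteq> {1..Suc m} \<Longrightarrow>
    killed_by_new_entry pattern_321 m v \<inter> inherited_sites v m A = (if v \<le> m then {u \<in> A. u \<le> v} else {})"
  unfolding killed_by_new_entry_321 inherited_sites_def unlift_def by auto

lemma bij_betw_card_killed_by_new_entry_321:
  assumes A: "A \<subseteq> {1..Suc m}" and top: "Suc m \<in> A"
  shows "bij_betw (\<lambda>v. card (killed_by_new_entry pattern_321 m v \<inter> inherited_sites v m A))
    A {..<card A}"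
proof -
  define c where "c v = (if v \<le> m then card {u \<in> A. u \<le> v} else 0)" for v
  have "card (killed_by_new_entry pattern_321 m v \<inter> inherited_sites v m A) = c v" for v
    unfolding killed_by_new_entry_inter_inherited_321[OF A] c_def by simp
  moreover have "finite A"
    using A finite_subset by blast
  moreover have "inj_on c A"
  proof (rule linorder_inj_onI')
    fix x y assume xy: "x \<in> A" "y \<in> A" "x < y"
    then have "x \<le> m"
      using A by auto
    show "c x \<noteq> c y"
    proof (cases "y \<le> m")
      case True
      have "card {u \<in> A. u \<le> x} < card {u \<in> A. u \<le> y}"
        using xy \<open>finite A\<close> by (intro card_less_card_if_subset_notin[where x = y]) auto
      then show ?thesis
        unfolding c_def using \<open>x \<le> m\<close> True by simp
    next
      case False
      have "c x > 0"
        unfolding c_def using xy \<open>x \<le> m\<close> \<open>finite A\<close> by (auto simp: card_gt_0_iff)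
      then show ?thesis
        unfolding c_def using False by simp
    qed
  qed
  moreover have "c v < card A" if "v \<in> A" for v
  proof (cases "v \<le> m")
    case True
    have "card {u \<in> A. u \<le> v} < card A"
      using True top \<open>finite A\<close> by (intro card_less_card_if_subset_notin[where x = "Suc m"]) auto
    then show ?thesis
      unfolding c_def using True by simp
  next
    case False
    then show ?thesis
      unfolding c_def using top \<open>finite A\<close> by (auto simp: card_gt_0_iff)
  qed
  ultimately show ?thesis
    using bij_betw_lessThan_card_if_inj_on[of A c] by simp
qed

lemma succession_rule_321: "succession_rule pattern_321"
proof (intro succession_rule.intro succession_rule_axioms.intro order_invariant_321)
  fix p m v
  assume "v \<in> active_sites pattern_321 2 p - active_sites pattern_321 1 p"
  then show "killed_by_new_entry pattern_321 m v \<inter> inherited_sites v m (active_sites pattern_321 1 p) = {}"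
    by (rule killed_by_new_entry_disjoint_321)
next
  fix p m
  assume p: "p \<in> perms m"
  have "Suc m \<in> active_sites pattern_321 1 p"
    by (rule Suc_in_active_sites_1[OF p]) (unfold kills_321, simp)
  then show "bij_betw (\<lambda>v. card (killed_by_new_entry pattern_321 m v \<inter>
      inherited_sites v m (active_sites pattern_321 1 p)))
      (active_sites pattern_321 1 p) {..<card (active_sites pattern_321 1 p)}"
    by (rule bij_betw_card_killed_by_new_entry_321[OF active_sites_subset[OF p]])
qed

lemma order_invariant_312: "order_invariant pattern_312"
  by unfold_locales (auto simp: pattern_312_def)

lemma kills_312: "kills pattern_312 x y s \<longleftrightarrow> y < s \<and> s \<le> x"
  unfolding kills_def pattern_312_def lift_def by auto

lemma killed_by_new_entry_312:
  "v \<ge> 1 \<Longrightarrow> killed_by_new_entry pattern_312 m v = {Suc v..Suc m}"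
  unfolding killed_by_new_entry_def kills_312 lift_def by (auto intro: bexI[of _ m])

lemma killed_by_new_entry_disjoint_312:
  assumes p: "p \<in> perms m" and v: "v \<in> active_sites pattern_312 2 p - active_sites pattern_312 1 p"
  shows "killed_by_new_entry pattern_312 m v \<inter> inherited_sites v m (active_sites pattern_312 1 p) = {}"
proof -
  have m: "length p = m"
    using perms_length[OF p] .
  obtain i j where ij: "i < j" "Suc j = m" and "kills pattern_312 (p ! i) (p ! j) v"
    using killing_pair_at_end[OF v] m by metis
  then have below: "p ! j < v" "v \<le> p ! i"
    unfolding kills_312 by simp_all
  \<comment> \<open>the largest entry m and the last entry form a pair killing every site of p from v to m\<close>
  obtain q where q: "q < m" "p ! q = m"
    using perms_ex_nth_iff[OF p, of "\<lambda>x. x = m"] ij by auto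
  have "p ! i \<le> m"
    using nth_in_perms[OF p] ij by auto
  then have "q < j"
    using q ij below by (cases "q = j") auto
  then have "s \<in> killed_sites pattern_312 1 p" if "v \<le> s" "s \<le> m" for s
    using ij q below that m unfolding killed_sites_def kills_312 by force
  moreover have "v \<ge> 1"
    using v unfolding active_sites_def by auto
  ultimately show ?thesis
    unfolding killed_by_new_entry_312[OF \<open>v \<ge> 1\<close>] inherited_sites_def active_sites_def unlift_def
    by auto
qed

lemma card_killed_by_new_entry_312:
  assumes A: "A \<subseteq> {1..Suc m}" and top: "Suc m \<in> A" and v: "v \<in> A"
  shows "card (killed_by_new_entry pattern_312 m v \<inter> inherited_sites v m A) = card {u \<in> A. v < u}"
proof -
  have "v \<ge> 1"
    using v A by auto
  then have "killed_by_new_entry pattern_312 m v \<inter> inherited_sites v m A =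
      Suc ` ({u \<in> A. v \<le> u} - {Suc m})"
    unfolding killed_by_new_entry_312[OF \<open>v \<ge> 1\<close>] inherited_sites_def
    by (intro eq_image_Suc) (use A in \<open>auto simp: unlift_def\<close>)
  also have "card \<dots> = card {u \<in> A. v \<le> u} - 1"
    using v top A finite_subset[OF A] by (subst card_image) (auto simp: card_Diff_singleton)
  also have "{u \<in> A. v \<le> u} = insert v {u \<in> A. v < u}"
    using v by auto
  finally show ?thesis
    using finite_subset[OF A] by simp
qed

lemma succession_rule_312: "succession_rule pattern_312"
proof (intro succession_rule.intro succession_rule_axioms.intro order_invariant_312)
  fix p m v
  assume "p \<in> perms m" "v \<in> active_sites pattern_312 2 p - active_sites pattern_312 1 p"
  then show "killed_by_new_entry pattern_312 m v \<inter> inherited_sites v m (active_sites pattern_312 1 p) = {}"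
    by (rule killed_by_new_entry_disjoint_312)
next
  fix p m
  assume p: "p \<in> perms m"
  let ?A = "active_sites pattern_312 1 p"
  have "Suc m \<in> ?A"
    by (rule Suc_in_active_sites_1[OF p]) (unfold kills_312, simp)
  then have "card (killed_by_new_entry pattern_312 m v \<inter> inherited_sites v m ?A) = card {u \<in> ?A. v < u}"
    if "v \<in> ?A" for v
    using card_killed_by_new_entry_312[OF active_sites_subset[OF p] _ that] by blast
  moreover have "bij_betw (\<lambda>v. card {u \<in> ?A. v < u}) ?A {..<card ?A}"
    by (rule bij_betw_card_greater) simp
  ultimately show "bij_betw (\<lambda>v. card (killed_by_new_entry pattern_312 m v \<inter> inherited_sites v m ?A))
      ?A {..<card ?A}"
    by (rule bij_betw_cong[THEN iffD2])
qed

lemma order_invariant_213: "order_invariant pattern_213"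
  by unfold_locales (auto simp: pattern_213_def)

lemma kills_213: "kills pattern_213 x y s \<longleftrightarrow> y < x \<and> x < s"
  unfolding kills_def pattern_213_def lift_def by auto

lemma killed_by_new_entry_213:
  "v \<ge> 1 \<Longrightarrow> killed_by_new_entry pattern_213 m v = {Suc (Suc v)..Suc (Suc m)}"
  unfolding killed_by_new_entry_def kills_213 lift_def by (auto intro: bexI[of _ v])

lemma killed_by_new_entry_disjoint_213:
  assumes v: "v \<in> active_sites pattern_213 2 p - active_sites pattern_213 1 p"
  shows "killed_by_new_entry pattern_213 m v \<inter> inherited_sites v m (active_sites pattern_213 1 p) = {}"
proof -
  obtain i j where ij: "i < j" "Suc j = length p" and "kills pattern_213 (p ! i) (p ! j) v"
    using killing_pair_at_end[OF v] .
  then have "p ! j < p ! i" "p ! i < v"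
    unfolding kills_213 by simp_all
  then have "s \<in> killed_sites pattern_213 1 p" if "v \<le> s" for s
    using ij that unfolding killed_sites_def kills_213 by force
  moreover have "v \<ge> 1"
    using v unfolding active_sites_def by auto
  ultimately show ?thesis
    unfolding killed_by_new_entry_213[OF \<open>v \<ge> 1\<close>] inherited_sites_def active_sites_def unlift_def
    by auto
qed

lemma card_killed_by_new_entry_213:
  assumes A: "A \<subseteq> {1..Suc m}" and v: "v \<in> A"
  shows "card (killed_by_new_entry pattern_213 m v \<inter> inherited_sites v m A) = card {u \<in> A. v < u}"
proof -
  have "v \<ge> 1"
    using v A by auto
  then have "killed_by_new_entry pattern_213 m v \<inter> inherited_sites v m A = Suc ` {u \<in> A. v < u}"
    unfolding killed_by_new_entry_213[OF \<open>v \<ge> 1\<close>] inherited_sites_def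
    by (intro eq_image_Suc) (use A in \<open>auto simp: unlift_def\<close>)
  then show ?thesis
    by (simp add: card_image)
qed

lemma succession_rule_213: "succession_rule pattern_213"
proof (intro succession_rule.intro succession_rule_axioms.intro order_invariant_213)
  fix p m v
  assume "v \<in> active_sites pattern_213 2 p - active_sites pattern_213 1 p"
  then show "killed_by_new_entry pattern_213 m v \<inter> inherited_sites v m (active_sites pattern_213 1 p) = {}"
    by (rule killed_by_new_entry_disjoint_213)
next
  fix p m
  assume p: "p \<in> perms m"
  let ?A = "active_sites pattern_213 1 p"
  have "card (killed_by_new_entry pattern_213 m v \<inter> inherited_sites v m ?A) = card {u \<in> ?A. v < u}"
    if "v \<in> ?A" for v
    using card_killed_by_new_entry_213[OF active_sites_subset[OF p] that] .
  moreover have "bij_betw (\<lambda>v. card {u \<in> ?A. v < u}) ?A {..<card ?A}"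
    by (rule bij_betw_card_greater) simp
  ultimately show "bij_betw (\<lambda>v. card (killed_by_new_entry pattern_213 m v \<inter> inherited_sites v m ?A))
      ?A {..<card ?A}"
    by (rule bij_betw_cong[THEN iffD2])
qed

section \<open>Symmetries of POP avoidance\<close>

lemma contains_pop_cong:
  "(\<And>q r. q \<in> {1..k} \<Longrightarrow> r \<in> {1..k} \<Longrightarrow> lt q r = lt' q r) \<Longrightarrow>
    contains_pop k lt p = contains_pop k lt' p"
  unfolding contains_pop_def by auto

lemma contains_pop_mirror_rev:
  assumes "contains_pop k lt p"
  shows "contains_pop k (\<lambda>q r. lt (Suc k - q) (Suc k - r)) (rev p)"
proof -
  obtain \<iota> where mono: "strict_mono_on {1..k} \<iota>" and bound: "\<forall>q\<in>{1..k}. \<iota> q < length p"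
    and rel: "\<forall>q\<in>{1..k}. \<forall>r\<in>{1..k}. lt q r \<longrightarrow> p ! \<iota> q < p ! \<iota> r"
    using assms unfolding contains_pop_def by blast
  define \<kappa> where "\<kappa> q = length p - Suc (\<iota> (Suc k - q))" for q
  have mirror: "Suc k - q \<in> {1..k}" if "q \<in> {1..k}" for q
    using that by auto
  have "strict_mono_on {1..k} \<kappa>"
  proof (rule strict_mono_onI)
    fix q r assume "q \<in> {1..k}" "r \<in> {1..k}" "q < r"
    then have "\<iota> (Suc k - r) < \<iota> (Suc k - q)" "\<iota> (Suc k - q) < length p"
      using strict_mono_onD[OF mono] bound mirror by auto
    then show "\<kappa> q < \<kappa> r"
      unfolding \<kappa>_def by linarith
  qed
  moreover have "\<forall>q\<in>{1..k}. \<kappa> q < length (rev p)"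
    unfolding \<kappa>_def using bound mirror by fastforce
  moreover have "rev p ! \<kappa> q = p ! \<iota> (Suc k - q)" if "q \<in> {1..k}" for q
  proof -
    have "\<iota> (Suc k - q) < length p"
      using bound mirror[OF that] by blast
    then show ?thesis
      unfolding \<kappa>_def by (simp add: rev_nth)
  qed
  ultimately show ?thesis
    unfolding contains_pop_def using rel mirror by (intro exI[of _ \<kappa>]) auto
qed

lemma contains_pop_rev:
  "contains_pop k lt (rev p) \<longleftrightarrow> contains_pop k (\<lambda>q r. lt (Suc k - q) (Suc k - r)) p"
proof
  assume "contains_pop k lt (rev p)"
  then show "contains_pop k (\<lambda>q r. lt (Suc k - q) (Suc k - r)) p"
    using contains_pop_mirror_rev[of k lt "rev p"] by simp
next
  assume "contains_pop k (\<lambda>q r. lt (Suc k - q) (Suc k - r)) p"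
  then have "contains_pop k (\<lambda>q r. lt (Suc k - (Suc k - q)) (Suc k - (Suc k - r))) (rev p)"
    by (rule contains_pop_mirror_rev)
  then show "contains_pop k lt (rev p)"
    by (subst (asm) contains_pop_cong[where lt' = lt]) auto
qed

lemma contains_pop_complement:
  assumes p: "p \<in> perms n"
  shows "contains_pop k lt (map (\<lambda>x. Suc n - x) p) \<longleftrightarrow> contains_pop k (\<lambda>q r. lt r q) p"
proof -
  have less_iff: "Suc n - p ! i < Suc n - p ! j \<longleftrightarrow> p ! j < p ! i"
    if "i < length p" "j < length p" for i j
    using nth_in_perms[OF p, of i] nth_in_perms[OF p, of j] perms_length[OF p] that by auto
  show ?thesis
    unfolding contains_pop_def length_map by (rule ex_cong1) (auto simp: less_iff)
qed

lemma card_avoiders_eq_if_involution: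
  assumes perm: "\<And>p. p \<in> perms n \<Longrightarrow> h p \<in> perms n"
    and invol: "\<And>p. p \<in> perms n \<Longrightarrow> h (h p) = p"
    and contains: "\<And>p. p \<in> perms n \<Longrightarrow> contains_pop k P (h p) \<longleftrightarrow> contains_pop k Q p"
  shows "card (avoiders n k P) = card (avoiders n k Q)"
proof -
  have "bij_betw h (avoiders n k Q) (avoiders n k P)"
  proof (rule bij_betw_byWitness[where f' = h])
    show "h ` avoiders n k Q \<subseteq> avoiders n k P"
      using perm contains unfolding avoiders_def by auto
    show "h ` avoiders n k P \<subseteq> avoiders n k Q"
      using perm contains invol unfolding avoiders_def by (auto, metis)
  qed (use invol in \<open>auto simp: avoiders_def\<close>)
  then show ?thesis
    by (simp add: bij_betw_same_card)
qed

lemma rev_in_perms: "p \<in> perms n \<Longrightarrow> rev p \<in> perms n"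
  unfolding perms_def by simp

lemma complement_in_perms:
  assumes p: "p \<in> perms n"
  shows "map (\<lambda>x. Suc n - x) p \<in> perms n"
proof -
  have "inj_on (\<lambda>x. Suc n - x) {1..n}"
    by (rule inj_onI) auto
  moreover have "(\<lambda>x. Suc n - x) ` {1..n} = {1..n}"
  proof
    show "{1..n} \<subseteq> (\<lambda>x. Suc n - x) ` {1..n}"
    proof
      fix x assume "x \<in> {1..n}"
      then show "x \<in> (\<lambda>x. Suc n - x) ` {1..n}"
        by (intro image_eqI[where x = "Suc n - x"]) auto
    qed
  qed auto
  ultimately show ?thesis
    using p unfolding perms_def by (simp add: distinct_map)
qed

lemma complement_complement:
  "p \<in> perms n \<Longrightarrow> map (\<lambda>x. Suc n - x) (map (\<lambda>x. Suc n - x) p) = p"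
  unfolding perms_def by (auto intro: map_idI)

section \<open>Chain POPs with an isolated point\<close>

text \<open>
  For {a, b, c} = {1, 2, 4} the POP (a,b,c;3) constrains only the entries at positions 1, 2
  and 4; chain_pattern a b c reads the chain c < b < a off the entries x, y, z at these positions.
\<close>

definition chain_pattern :: "nat \<Rightarrow> nat \<Rightarrow> nat \<Rightarrow> nat \<Rightarrow> nat \<Rightarrow> nat \<Rightarrow> bool" where
  "chain_pattern a b c x y z \<longleftrightarrow>
    (let w = (\<lambda>q. if q = 1 then x else if q = 2 then y else z) in w c < w b \<and> w b < w a)"

lemma chain_pattern_eq:
  assumes "a \<in> {1,2,4}" "b \<in> {1,2,4}" "c \<in> {1,2,4}" "f 1 = x" "f 2 = y" "f 4 = z"
  shows "chain_pattern a b c x y z \<longleftrightarrow> f c < f b \<and> f b < f a"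
proof -
  have "(if q = 1 then x else if q = 2 then y else z) = f q" if "q \<in> {1,2,4}" for q :: nat
    using that assms(4-6) by auto
  then show ?thesis
    unfolding chain_pattern_def Let_def using assms(1-3) by simp
qed

lemma contains_chain_pop_iff_occurs_gapped:
  assumes abc: "a \<in> {1,2,4}" "b \<in> {1,2,4}" "c \<in> {1,2,4}"
  shows "contains_pop 4 (chain_pop a b c d) p \<longleftrightarrow> occurs_gapped (chain_pattern a b c) p"
proof
  assume "contains_pop 4 (chain_pop a b c d) p"
  then obtain \<iota> where mono: "strict_mono_on {1..4} \<iota>" and bound: "\<forall>q\<in>{1..4}. \<iota> q < length p"
    and rel: "\<forall>q\<in>{1..4}. \<forall>r\<in>{1..4}. chain_pop a b c d q r \<longrightarrow> p ! \<iota> q < p ! \<iota> r"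
    unfolding contains_pop_def by blast
  have "\<iota> 1 < \<iota> 2" "\<iota> 2 < \<iota> 3" "\<iota> 3 < \<iota> 4" "\<iota> 4 < length p"
    using strict_mono_onD[OF mono] bound by auto
  moreover have "a \<in> {1..4}" "b \<in> {1..4}" "c \<in> {1..4}"
    using abc by auto
  then have "p ! \<iota> c < p ! \<iota> b" "p ! \<iota> b < p ! \<iota> a"
    using rel unfolding chain_pop_def by blast+
  then have "chain_pattern a b c (p ! \<iota> 1) (p ! \<iota> 2) (p ! \<iota> 4)"
    using chain_pattern_eq[OF abc, of "\<lambda>q. p ! \<iota> q"] by simp
  ultimately show "occurs_gapped (chain_pattern a b c) p"
    unfolding occurs_gapped_def by (intro exI[of _ "\<iota> 1"] exI[of _ "\<iota> 2"] exI[of _ "\<iota> 4"]) simp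
next
  assume "occurs_gapped (chain_pattern a b c) p"
  then obtain i j k where ijk: "i < j" "j + 2 \<le> k" "k < length p"
    and chain: "chain_pattern a b c (p ! i) (p ! j) (p ! k)"
    unfolding occurs_gapped_def by blast
  define \<iota> where "\<iota> q = (if q = 1 then i else if q = 2 then j else if q = 3 then Suc j else k)" for q :: nat
  have "strict_mono_on {1..4} \<iota>"
  proof (rule strict_mono_onI)
    fix q r :: nat assume "q \<in> {1..4}" "r \<in> {1..4}" "q < r"
    then have "q = 1 \<and> r \<in> {2,3,4} \<or> q = 2 \<and> r \<in> {3,4} \<or> q = 3 \<and> r = 4"
      by auto
    then show "\<iota> q < \<iota> r"
      unfolding \<iota>_def using ijk by auto
  qed
  moreover have "\<forall>q\<in>{1..4}. \<iota> q < length p"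
    unfolding \<iota>_def using ijk by auto
  moreover have "p ! \<iota> c < p ! \<iota> b" "p ! \<iota> b < p ! \<iota> a"
    using chain chain_pattern_eq[OF abc, of "\<lambda>q. p ! \<iota> q"] unfolding \<iota>_def by simp_all
  then have "\<forall>q\<in>{1..4}. \<forall>r\<in>{1..4}. chain_pop a b c d q r \<longrightarrow> p ! \<iota> q < p ! \<iota> r"
    unfolding chain_pop_def by auto
  ultimately show "contains_pop 4 (chain_pop a b c d) p"
    unfolding contains_pop_def by blast
qed

lemma chain_pattern_124: "chain_pattern 1 2 4 = pattern_321"
  by (auto simp: fun_eq_iff chain_pattern_def pattern_321_def)

lemma chain_pattern_142: "chain_pattern 1 4 2 = pattern_312"
  by (auto simp: fun_eq_iff chain_pattern_def pattern_312_def)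

lemma chain_pattern_412: "chain_pattern 4 1 2 = pattern_213"
  by (auto simp: fun_eq_iff chain_pattern_def pattern_213_def)

lemma avoiders_chain_pop_124: "avoiders n 4 (chain_pop 1 2 4 d) = gapped_avoiders pattern_321 n"
  using contains_chain_pop_iff_occurs_gapped[of 1 2 4 d, unfolded chain_pattern_124]
  unfolding avoiders_def gapped_avoiders_def by simp

lemma avoiders_chain_pop_142: "avoiders n 4 (chain_pop 1 4 2 d) = gapped_avoiders pattern_312 n"
  using contains_chain_pop_iff_occurs_gapped[of 1 4 2 d, unfolded chain_pattern_142]
  unfolding avoiders_def gapped_avoiders_def by simp

lemma avoiders_chain_pop_412: "avoiders n 4 (chain_pop 4 1 2 d) = gapped_avoiders pattern_213 n"
  using contains_chain_pop_iff_occurs_gapped[of 4 1 2 d, unfolded chain_pattern_412]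
  unfolding avoiders_def gapped_avoiders_def by simp

lemma card_avoiders_chain_pop_complement:
  "card (avoiders n 4 (chain_pop a b c d)) = card (avoiders n 4 (chain_pop c b a d))"
proof (rule card_avoiders_eq_if_involution[where h = "map (\<lambda>x. Suc n - x)"])
  have "(\<lambda>q r. chain_pop a b c d r q) = chain_pop c b a d"
    unfolding chain_pop_def by (intro ext) auto
  then show "contains_pop 4 (chain_pop a b c d) (map (\<lambda>x. Suc n - x) p) \<longleftrightarrow>
      contains_pop 4 (chain_pop c b a d) p" if "p \<in> perms n" for p
    using contains_pop_complement[OF that] by simp
qed (use complement_in_perms complement_complement in blast)+

lemma card_avoiders_chain_pop_rev:
  assumes "a \<in> {1..4}" "b \<in> {1..4}" "c \<in> {1..4}"
  shows "card (avoiders n 4 (chain_pop a b c d)) =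
    card (avoiders n 4 (chain_pop (5 - a) (5 - b) (5 - c) d))"
proof (rule card_avoiders_eq_if_involution[where h = rev])
  have "contains_pop 4 (\<lambda>q r. chain_pop a b c d (Suc 4 - q) (Suc 4 - r)) p \<longleftrightarrow>
      contains_pop 4 (chain_pop (5 - a) (5 - b) (5 - c) d) p" for p
    by (rule contains_pop_cong) (use assms in \<open>auto simp: chain_pop_def\<close>)
  then show "contains_pop 4 (chain_pop a b c d) (rev p) \<longleftrightarrow>
      contains_pop 4 (chain_pop (5 - a) (5 - b) (5 - c) d) p" for p
    by (simp add: contains_pop_rev)
qed (simp_all add: rev_in_perms)

lemma card_avoiders_chain_pop_isolated_3:
  assumes "a \<in> {1,2,4}" "b \<in> {1,2,4}" "c \<in> {1,2,4}" "distinct [a, b, c]"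
  shows "card (avoiders (Suc m) 4 (chain_pop a b c d)) = level_sum m (\<lambda>_. 1)"
proof -
  have "card (avoiders (Suc m) 4 (chain_pop 1 2 4 d)) = level_sum m (\<lambda>_. 1)"
    unfolding avoiders_chain_pop_124 by (rule succession_rule.card_gapped_avoiders[OF succession_rule_321])
  moreover have "card (avoiders (Suc m) 4 (chain_pop 1 4 2 d)) = level_sum m (\<lambda>_. 1)"
    unfolding avoiders_chain_pop_142 by (rule succession_rule.card_gapped_avoiders[OF succession_rule_312])
  moreover have "card (avoiders (Suc m) 4 (chain_pop 4 1 2 d)) = level_sum m (\<lambda>_. 1)"
    unfolding avoiders_chain_pop_412 by (rule succession_rule.card_gapped_avoiders[OF succession_rule_213])
  moreover have "(a, b, c) \<in> {(1, 2, 4), (1, 4, 2), (4, 1, 2), (4, 2, 1), (2, 4, 1), (2, 1, 4)}"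
    using assms by auto
  ultimately show ?thesis
    using card_avoiders_chain_pop_complement[of "Suc m" a b c d] by auto
qed

lemma card_avoiders_chain_pop:
  assumes d: "d \<in> {2, 3}" and abcd: "distinct [a, b, c, d]" "{a, b, c, d} = {1..4}"
  shows "card (avoiders (Suc m) 4 (chain_pop a b c d)) = level_sum m (\<lambda>_. 1)"
proof -
  have range: "{1..4::nat} = {1, 2, 3, 4}"
    by auto
  show ?thesis
  proof (cases "d = 3")
    case True
    then have "a \<in> {1,2,4}" "b \<in> {1,2,4}" "c \<in> {1,2,4}" "distinct [a, b, c]"
      using abcd unfolding range by auto
    then show ?thesis
      by (rule card_avoiders_chain_pop_isolated_3)
  next
    case False
    then have abc: "a \<in> {1,3,4}" "b \<in> {1,3,4}" "c \<in> {1,3,4}" "distinct [a, b, c]"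
      using abcd d unfolding range by auto
    then have "5 - a \<in> {1,2,4}" "5 - b \<in> {1,2,4}" "5 - c \<in> {1,2,4}" "distinct [5 - a, 5 - b, 5 - c]"
      by auto
    then have "card (avoiders (Suc m) 4 (chain_pop (5 - a) (5 - b) (5 - c) d)) = level_sum m (\<lambda>_. 1)"
      by (rule card_avoiders_chain_pop_isolated_3)
    moreover have "a \<in> {1..4}" "b \<in> {1..4}" "c \<in> {1..4}"
      using abc by auto
    ultimately show ?thesis
      using card_avoiders_chain_pop_rev by metis
  qed
qed

theorem mainTheorem8:
  shows "(\<forall>a b c d a' b' c' d'.
            d \<in> {2,3} \<and> distinct [a,b,c,d] \<and> {a,b,c,d} = {1..4} \<and>
            d' \<in> {2,3} \<and> distinct [a',b',c',d'] \<and> {a',b',c',d'} = {1..4::nat}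
            \<longrightarrow> wilf_equiv 4 (chain_pop a b c d) (chain_pop a' b' c' d'))
         \<and> wilf_equiv 4 (chain_pop 4 1 2 3) (chain_pop 4 2 1 3)
         \<and> wilf_equiv 4 (chain_pop 4 2 1 3) (chain_pop 2 4 1 3)"
proof -
  have equiv: "wilf_equiv 4 (chain_pop a b c d) (chain_pop a' b' c' d')"
    if "d \<in> {2,3}" "distinct [a,b,c,d]" "{a,b,c,d} = {1..4}"
      "d' \<in> {2,3}" "distinct [a',b',c',d']" "{a',b',c',d'} = {1..4::nat}" for a b c d a' b' c' d'
    unfolding wilf_equiv_def
  proof (intro allI impI)
    fix n :: nat
    assume "n \<ge> 1"
    then obtain m where "n = Suc m"
      by (cases n) auto
    then show "card (avoiders n 4 (chain_pop a b c d)) = card (avoiders n 4 (chain_pop a' b' c' d'))"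
      using card_avoiders_chain_pop[OF that(1-3)] card_avoiders_chain_pop[OF that(4-6)] by simp
  qed
  show ?thesis
  proof (intro conjI allI impI)
    fix a b c d a' b' c' d' :: nat
    assume "d \<in> {2,3} \<and> distinct [a,b,c,d] \<and> {a,b,c,d} = {1..4} \<and>
      d' \<in> {2,3} \<and> distinct [a',b',c',d'] \<and> {a',b',c',d'} = {1..4}"
    then show "wilf_equiv 4 (chain_pop a b c d) (chain_pop a' b' c' d')"
      using equiv by blast
  qed (rule equiv; auto)+
qed

end
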